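(* For any simply laced Dynkin diagram with $r$ vertices (not necessarily connected), every multipath in it has total length at most $r(r+1)/2$, and equality can occur only if the diagram is of type $A_r$.
   Context: A simple path in a Dynkin diagram is a sequence of distinct vertices, consecutive ones joined by an edge; its length is the number of its vertices. Given distinct vertices $i_1,\ldots,i_k$ and positive integers $m_1,\ldots,m_k$, a multipath with beginnings $i_1,\ldots,i_k$ and lengths $m_1,\ldots,m_k$ is a sequence of simple paths $(j_{p,1},\ldots,j_{p,m_p})$, $p=1,\ldots,k$, with $j_{p,1}=i_p$, such that for $p<p'$ the vertex $i_p$ does not occur in $(j_{p',1},\ldots,j_{p',m_{p'}})$. Its total length is $m_1+\cdots+m_k$. *)

theory Defs
  imports Main
begin

datatype dynkin_type = TypeA nat | TypeD nat | TypeE nat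

fun dt_size :: "dynkin_type \<Rightarrow> nat" where
  "dt_size (TypeA n) = n" | "dt_size (TypeD n) = n" | "dt_size (TypeE n) = n"

fun dt_valid :: "dynkin_type \<Rightarrow> bool" where
  "dt_valid (TypeA n) = (n \<ge> 1)"
| "dt_valid (TypeD n) = (n \<ge> 4)"
| "dt_valid (TypeE n) = (n \<in> {6,7,8})"

text \<open>Directed "generating" edges: A_n is the path 0-1-...-(n-1);
D_n is the path 0-...-(n-2) plus the edge (n-3)-(n-1);
E_n is the path 0-...-(n-2) plus the edge 2-(n-1).\<close>
fun dt_edge0 :: "dynkin_type \<Rightarrow> nat \<Rightarrow> nat \<Rightarrow> bool" where
  "dt_edge0 (TypeA n) i j = (j = i + 1 \<and> j < n)"
| "dt_edge0 (TypeD n) i j = ((j = i + 1 \<and> j < n - 1) \<or> (i = n - 3 \<and> j = n - 1))"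
| "dt_edge0 (TypeE n) i j = ((j = i + 1 \<and> j < n - 1) \<or> (i = 2 \<and> j = n - 1))"

definition dt_adj :: "dynkin_type \<Rightarrow> nat \<Rightarrow> nat \<Rightarrow> bool" where
  "dt_adj t i j = (dt_edge0 t i j \<or> dt_edge0 t j i)"

definition iso_to_type :: "'a set \<Rightarrow> ('a \<Rightarrow> 'a \<Rightarrow> bool) \<Rightarrow> dynkin_type \<Rightarrow> bool" where
  "iso_to_type C E t = (\<exists>f. bij_betw f C {0..<dt_size t} \<and>
      (\<forall>x\<in>C. \<forall>y\<in>C. E x y \<longleftrightarrow> dt_adj t (f x) (f y)))"

definition component :: "'a set \<Rightarrow> ('a \<Rightarrow> 'a \<Rightarrow> bool) \<Rightarrow> 'a \<Rightarrow> 'a set" where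
  "component V E x = {y. (\<lambda>u v. u \<in> V \<and> v \<in> V \<and> E u v)\<^sup>*\<^sup>* x y}"

definition simply_laced_dynkin :: "'a set \<Rightarrow> ('a \<Rightarrow> 'a \<Rightarrow> bool) \<Rightarrow> bool" where
  "simply_laced_dynkin V E = (finite V \<and> (\<forall>x y. E x y \<longrightarrow> x \<in> V \<and> y \<in> V) \<and>
     (\<forall>x\<in>V. \<exists>t. dt_valid t \<and> iso_to_type (component V E x) E t))"

definition simple_path :: "'a set \<Rightarrow> ('a \<Rightarrow> 'a \<Rightarrow> bool) \<Rightarrow> 'a list \<Rightarrow> bool" where
  "simple_path V E p = (p \<noteq> [] \<and> distinct p \<and> set p \<subseteq> V \<and>
     (\<forall>i. Suc i < length p \<longrightarrow> E (p ! i) (p ! Suc i)))"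

definition multipath :: "'a set \<Rightarrow> ('a \<Rightarrow> 'a \<Rightarrow> bool) \<Rightarrow> 'a list list \<Rightarrow> bool" where
  "multipath V E ps = ((\<forall>p\<in>set ps. simple_path V E p) \<and> distinct (map hd ps) \<and>
     (\<forall>p p'. p < p' \<and> p' < length ps \<longrightarrow> hd (ps ! p) \<notin> set (ps ! p')))"

definition total_length :: "'a list list \<Rightarrow> nat" where
  "total_length ps = sum_list (map length ps)"

end

theory Submission
  imports Defs
begin

(* The q-th path of a multipath avoids the q distinct beginnings before it, so its length is at
   most r - q, and there are at most r paths; summing gives r(r+1)/2.  Equality forces the first
   path to visit all r vertices.  In the standard labelling of a simply laced Dynkin diagram every
   vertex has at most one smaller neighbour, whereas the largest label on a cycle would have two;
   so the diagram is a forest, every simple path in it is an induced path, and a spanning induced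
   path is a diagram of type A_r. *)

lemma dt_edge0_less: "dt_valid t \<Longrightarrow> dt_edge0 t i j \<Longrightarrow> i < j"
  by (cases t) auto

lemma dt_edge0_unique_source: "dt_valid t \<Longrightarrow> dt_edge0 t i j \<Longrightarrow> dt_edge0 t i' j \<Longrightarrow> i = i'"
  by (cases t) auto

lemma dt_adj_sym: "dt_adj t i j = dt_adj t j i"
  unfolding dt_adj_def by auto

lemma dt_adj_irrefl: "dt_valid t \<Longrightarrow> \<not> dt_adj t i i"
  unfolding dt_adj_def using dt_edge0_less by blast

lemma dt_adj_unique_lower_neighbour:
  "dt_valid t \<Longrightarrow> dt_adj t x m \<Longrightarrow> dt_adj t y m \<Longrightarrow> x < m \<Longrightarrow> y < m \<Longrightarrow> x = y"
  unfolding dt_adj_def using dt_edge0_less dt_edge0_unique_source by (meson not_less_iff_gr_or_eq)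

lemma dt_adj_path_no_chord:
  fixes w :: "nat \<Rightarrow> nat"
  assumes valid: "dt_valid t" and inj: "inj_on w {a..b}" and long: "a + 2 \<le> b"
    and path: "\<And>k. a \<le> k \<Longrightarrow> k < b \<Longrightarrow> dt_adj t (w k) (w (Suc k))"
    and chord: "dt_adj t (w a) (w b)"
  shows False
proof -
  have "Max (w ` {a..b}) \<in> w ` {a..b}"
    using long by (intro Max_in) auto
  then obtain m where m: "m \<in> {a..b}" and m_max: "w m = Max (w ` {a..b})"
    by auto
  have lower: "w j < w m" if "j \<in> {a..b}" "j \<noteq> m" for j
    using that m m_max inj by (metis Max_ge finite_atLeastAtMost finite_imageI image_eqI
        inj_on_eq_iff order_le_less)
  have two_lower: False
    if "j \<in> {a..b}" "j' \<in> {a..b}" "j \<noteq> m" "j' \<noteq> m" "j \<noteq> j'"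
      "dt_adj t (w j) (w m)" "dt_adj t (w j') (w m)" for j j'
    using dt_adj_unique_lower_neighbour[OF valid that(6,7) lower lower] that inj
    by (auto simp: inj_on_eq_iff)
  consider "m = a" | "m = b" | "a < m" "m < b"
    using m by fastforce
  then show False
  proof cases
    case 1
    then show ?thesis
      using two_lower[of "Suc a" b] path[of a] chord long by (auto simp: dt_adj_sym)
  next
    case 2
    obtain b' where "b = Suc b'"
      using long by (cases b) auto
    with 2 show ?thesis
      using two_lower[of b' a] path[of b'] chord long by (auto simp: dt_adj_sym)
  next
    case 3
    then obtain m' where "m = Suc m'"
      by (cases m) auto
    with 3 show ?thesis
      using two_lower[of m' "Suc m"] path[of m'] path[of m] by (auto simp: dt_adj_sym)
  qed
qed

lemma sum_diff_triangular: "(\<Sum>q<r. (r::nat) - q) = r * (r + 1) div 2"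
proof -
  have "2 * (\<Sum>q<r. r - q) = r * (r + 1)"
  proof (induction r)
    case (Suc r)
    have "(\<Sum>q<Suc r. Suc r - q) = Suc r + (\<Sum>q<r. r - q)"
      by (subst sum.lessThan_Suc_shift) simp
    with Suc show ?case by (simp add: algebra_simps)
  qed simp
  then show ?thesis by simp
qed

lemma sum_le_triangular:
  fixes l :: "nat \<Rightarrow> nat"
  assumes "k \<le> r" and "\<And>q. q < k \<Longrightarrow> l q + q \<le> r"
  shows "(\<Sum>q<k. l q) \<le> (\<Sum>q<r. r - q)"
proof -
  have "(\<Sum>q<k. l q) \<le> (\<Sum>q<k. r - q)"
    using assms(2) by (intro sum_mono) force
  also have "\<dots> \<le> (\<Sum>q<r. r - q)"
    using assms(1) by (intro sum_mono2) auto
  finally show ?thesis .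
qed

lemma sum_eq_triangular_imp_first:
  fixes l :: "nat \<Rightarrow> nat"
  assumes "k \<le> r" and bound: "\<And>q. q < k \<Longrightarrow> l q + q \<le> r"
    and eq: "(\<Sum>q<k. l q) = (\<Sum>q<r. r - q)" and "0 < r"
  shows "0 < k \<and> l 0 = r"
proof -
  obtain r' where r: "r = Suc r'"
    using \<open>0 < r\<close> gr0_implies_Suc by blast
  have triangle_r: "(\<Sum>q<r. r - q) = r + (\<Sum>q<r'. r' - q)"
    unfolding r by (subst sum.lessThan_Suc_shift) simp
  obtain k' where k: "k = Suc k'"
    using eq triangle_r r by (cases k) auto
  have "(\<Sum>q<k. l q) = l 0 + (\<Sum>q<k'. l (Suc q))"
    unfolding k by (subst sum.lessThan_Suc_shift) simp
  also have "(\<Sum>q<k'. l (Suc q)) \<le> (\<Sum>q<r'. r' - q)"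
    using assms(1) bound unfolding k r by (intro sum_le_triangular) force+
  finally have "(\<Sum>q<k. l q) \<le> l 0 + (\<Sum>q<r'. r' - q)"
    by simp
  moreover have "l 0 \<le> r"
    using bound[of 0] k by simp
  ultimately show ?thesis
    using eq triangle_r k by simp
qed

lemma total_length_conv_sum: "total_length ps = (\<Sum>q<length ps. length (ps ! q))"
  unfolding total_length_def by (simp add: sum_list_sum_nth atLeast0LessThan)

lemma multipath_nth_length_le:
  assumes fin: "finite V" and mp: "multipath V E ps" and q: "q < length ps"
  shows "length (ps ! q) + q \<le> card V"
proof -
  define H where "H = (\<lambda>i. hd (ps ! i)) ` {..<q}"
  have paths: "simple_path V E (ps ! i)" if "i < length ps" for i
    using mp that by (simp add: multipath_def)
  have "inj_on (\<lambda>i. hd (ps ! i)) {..<q}"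
    using mp q by (auto simp: multipath_def inj_on_def distinct_conv_nth) (metis less_trans)
  then have card_H: "card H = q"
    unfolding H_def by (simp add: card_image)
  have H_V: "H \<subseteq> V"
  proof
    fix x assume "x \<in> H"
    then obtain i where "i < q" "x = hd (ps ! i)"
      unfolding H_def by auto
    with paths[of i] q show "x \<in> V"
      by (metis hd_in_set less_trans simple_path_def subsetD)
  qed
  have "set (ps ! q) \<subseteq> V - H"
    using paths[OF q] mp q unfolding simple_path_def multipath_def H_def by auto
  then have "card (set (ps ! q)) \<le> card V - q"
    using fin card_H H_V by (metis card_Diff_subset card_mono finite_Diff infinite_super)
  moreover have "q \<le> card V"
    using card_mono[OF fin H_V] card_H by simp
  moreover have "card (set (ps ! q)) = length (ps ! q)"
    using paths[OF q] by (simp add: simple_path_def distinct_card)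
  ultimately show ?thesis
    by simp
qed

lemma multipath_length_le:
  assumes "finite V" and "multipath V E ps"
  shows "length ps \<le> card V"
proof (cases ps rule: rev_cases)
  case (snoc qs p)
  then have "p \<noteq> []"
    using assms(2) by (auto simp: multipath_def simple_path_def)
  then show ?thesis
    using multipath_nth_length_le[OF assms, of "length qs"] snoc by (cases p) auto
qed simp

lemma total_length_multipath_le:
  assumes "finite V" and "multipath V E ps"
  shows "total_length ps \<le> card V * (card V + 1) div 2"
  unfolding total_length_conv_sum sum_diff_triangular[symmetric]
  using assms by (intro sum_le_triangular multipath_length_le multipath_nth_length_le)

lemma total_length_multipath_eq_imp_spanning:
  assumes fin: "finite V" and mp: "multipath V E ps" and "V \<noteq> {}"
    and eq: "total_length ps = card V * (card V + 1) div 2"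
  shows "ps \<noteq> [] \<and> simple_path V E (ps ! 0) \<and> set (ps ! 0) = V"
proof -
  have "0 < length ps \<and> length (ps ! 0) = card V"
    using eq fin \<open>V \<noteq> {}\<close>
    unfolding total_length_conv_sum sum_diff_triangular[symmetric]
    by (intro sum_eq_triangular_imp_first multipath_length_le[OF fin mp]
        multipath_nth_length_le[OF fin mp]) (auto simp: card_gt_0_iff)
  moreover from this have path: "simple_path V E (ps ! 0)"
    using mp by (simp add: multipath_def)
  ultimately show ?thesis
    using fin by (auto simp: simple_path_def card_subset_eq distinct_card)
qed

lemma simply_laced_dynkin_sym:
  assumes dyn: "simply_laced_dynkin V E" and "E x y"
  shows "E y x"
proof -
  have in_V: "x \<in> V" "y \<in> V"
    using dyn \<open>E x y\<close> by (auto simp: simply_laced_dynkin_def)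
  then obtain t f where
    iso: "\<forall>u\<in>component V E x. \<forall>v\<in>component V E x. E u v \<longleftrightarrow> dt_adj t (f u) (f v)"
    using dyn unfolding simply_laced_dynkin_def iso_to_type_def by blast
  have "x \<in> component V E x" "y \<in> component V E x"
    using in_V \<open>E x y\<close> by (auto simp: component_def)
  then show ?thesis
    using iso \<open>E x y\<close> dt_adj_sym by metis
qed

lemma simply_laced_dynkin_irrefl:
  assumes dyn: "simply_laced_dynkin V E"
  shows "\<not> E x x"
proof
  assume "E x x"
  then have "x \<in> V"
    using dyn by (auto simp: simply_laced_dynkin_def)
  then obtain t f where "dt_valid t"
    and iso: "\<forall>u\<in>component V E x. \<forall>v\<in>component V E x. E u v \<longleftrightarrow> dt_adj t (f u) (f v)"
    using dyn unfolding simply_laced_dynkin_def iso_to_type_def by blast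
  moreover have "x \<in> component V E x"
    by (simp add: component_def)
  ultimately show False
    using \<open>E x x\<close> dt_adj_irrefl by blast
qed

lemma simple_path_nth_in_component:
  assumes "simple_path V E p" and "k < length p"
  shows "p ! k \<in> component V E (p ! 0)"
  using assms(2)
proof (induction k)
  case (Suc k)
  then have "E (p ! k) (p ! Suc k)" "p ! k \<in> V" "p ! Suc k \<in> V"
    using assms(1) by (auto simp: simple_path_def)
  with Suc show ?case
    unfolding component_def by (auto intro: rtranclp.rtrancl_into_rtrancl)
qed (simp add: component_def)

lemma simply_laced_dynkin_simple_path_no_chord:
  assumes dyn: "simply_laced_dynkin V E" and path: "simple_path V E p"
    and "i < j" and "j < length p" and chord: "E (p ! i) (p ! j)"
  shows "j = Suc i"
proof (rule ccontr)
  assume "j \<noteq> Suc i"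
  with \<open>i < j\<close> have long: "i + 2 \<le> j" by simp
  let ?C = "component V E (p ! 0)"
  have "p ! 0 \<in> V"
    using path by (auto simp: simple_path_def)
  then obtain t f where valid: "dt_valid t" and bij: "bij_betw f ?C {0..<dt_size t}"
    and iso: "\<forall>u\<in>?C. \<forall>v\<in>?C. E u v \<longleftrightarrow> dt_adj t (f u) (f v)"
    using dyn unfolding simply_laced_dynkin_def iso_to_type_def by blast
  have in_C: "p ! k \<in> ?C" if "k \<le> j" for k
    using simple_path_nth_in_component[OF path] that \<open>j < length p\<close> by simp
  show False
  proof (rule dt_adj_path_no_chord[OF valid _ long])
    show "inj_on (\<lambda>k. f (p ! k)) {i..j}"
    proof (rule inj_onI)
      fix x y assume "x \<in> {i..j}" "y \<in> {i..j}" "f (p ! x) = f (p ! y)"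
      then have "p ! x = p ! y"
        using bij in_C[of x] in_C[of y] by (auto simp: bij_betw_def inj_on_def)
      then show "x = y"
        using path \<open>x \<in> {i..j}\<close> \<open>y \<in> {i..j}\<close> \<open>j < length p\<close>
        by (auto simp: simple_path_def nth_eq_iff_index_eq)
    qed
    show "dt_adj t (f (p ! k)) (f (p ! Suc k))" if "i \<le> k" "k < j" for k
    proof -
      have "E (p ! k) (p ! Suc k)"
        using path that \<open>j < length p\<close> by (simp add: simple_path_def)
      then show ?thesis
        using iso in_C[of k] in_C[of "Suc k"] that by simp
    qed
    show "dt_adj t (f (p ! i)) (f (p ! j))"
      using iso in_C chord \<open>i < j\<close> by auto
  qed
qed

lemma simply_laced_dynkin_simple_path_induced:
  assumes dyn: "simply_laced_dynkin V E" and path: "simple_path V E p"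
    and "i < length p" and "j < length p"
  shows "E (p ! i) (p ! j) \<longleftrightarrow> j = Suc i \<or> i = Suc j"
proof
  assume "j = Suc i \<or> i = Suc j"
  then show "E (p ! i) (p ! j)"
    using path assms(3,4) simply_laced_dynkin_sym[OF dyn] by (auto simp: simple_path_def)
next
  assume edge: "E (p ! i) (p ! j)"
  have "i \<noteq> j"
    using edge simply_laced_dynkin_irrefl[OF dyn] by auto
  then consider "i < j" | "j < i"
    by linarith
  then show "j = Suc i \<or> i = Suc j"
    using simply_laced_dynkin_simple_path_no_chord[OF dyn path] simply_laced_dynkin_sym[OF dyn]
      edge assms(3,4) by cases blast+
qed

lemma iso_to_type_TypeA_if_spanning_induced_path:
  assumes "distinct p" and "set p = V"
    and induced: "\<And>i j. i < length p \<Longrightarrow> j < length p \<Longrightarrow> E (p ! i) (p ! j) \<longleftrightarrow> j = Suc i \<or> i = Suc j"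
  shows "iso_to_type V E (TypeA (length p))"
proof -
  define g where "g = inv_into {..<length p} ((!) p)"
  have bij_nth: "bij_betw ((!) p) {..<length p} V"
    using assms(1,2) by (simp add: bij_betw_nth)
  then have bij_g: "bij_betw g V {0..<length p}"
    unfolding g_def using bij_betw_inv_into by (force simp: atLeast0LessThan)
  have nth_g: "p ! g x = x" if "x \<in> V" for x
    unfolding g_def using bij_nth that by (simp add: bij_betw_def f_inv_into_f)
  have g_less: "g x < length p" if "x \<in> V" for x
    using bij_g that by (auto simp: bij_betw_def)
  have "E x y \<longleftrightarrow> dt_adj (TypeA (length p)) (g x) (g y)" if "x \<in> V" "y \<in> V" for x y
    using induced[OF g_less g_less, OF that] nth_g[OF that(1)] nth_g[OF that(2)]
      g_less[OF that(1)] g_less[OF that(2)]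
    by (auto simp: dt_adj_def)
  with bij_g show ?thesis
    unfolding iso_to_type_def by auto
qed

theorem mainTheorem6:
  fixes V :: "'a set" and E :: "'a \<Rightarrow> 'a \<Rightarrow> bool" and ps :: "'a list list"
  assumes "simply_laced_dynkin V E"
    and "multipath V E ps"
  shows "total_length ps \<le> card V * (card V + 1) div 2 \<and>
         (total_length ps = card V * (card V + 1) div 2 \<longrightarrow> iso_to_type V E (TypeA (card V)))"
proof (intro conjI impI)
  have fin: "finite V"
    using assms(1) by (simp add: simply_laced_dynkin_def)
  then show "total_length ps \<le> card V * (card V + 1) div 2"
    using assms(2) by (rule total_length_multipath_le)
  assume eq: "total_length ps = card V * (card V + 1) div 2"
  show "iso_to_type V E (TypeA (card V))"
  proof (cases "V = {}")
    case True
    then show ?thesis by (auto simp: iso_to_type_def bij_betw_def)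
  next
    case False
    then have path: "simple_path V E (ps ! 0)" and spanning: "set (ps ! 0) = V"
      using total_length_multipath_eq_imp_spanning[OF fin assms(2) _ eq] by auto
    then have "length (ps ! 0) = card V"
      by (auto simp: simple_path_def distinct_card)
    with path spanning show ?thesis
      using iso_to_type_TypeA_if_spanning_induced_path
        simply_laced_dynkin_simple_path_induced[OF assms(1) path]
      by (metis simple_path_def)
  qed
qed

end
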